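(* Let $X=(X_1,\dots,X_k)$ be a $k$-good random valuation and let $0<\lambda_1,\dots,\lambda_k\le1$. Let $\mathcal{M}_{\lambda_1,\dots,\lambda_k}$ be the set of all IC and IR mechanisms $\mu=(q,s)$ with $q_i(x)\in[0,\lambda_i]$ for every $x\in\mathbb{R}_+^k$ and $i=1,\dots,k$. Then \[ \textsc{Rev}(X_1,\dots,X_k)=\sup_{\mu\in\mathcal{M}_{\lambda_1,\dots,\lambda_k}}R(\mu;\tilde X_1,\dots,\tilde X_k),\qquad\text{where }\tilde X_i:=X_i/\lambda_i . \]
   Context: A $k$-good random valuation is a random vector in $\mathbb{R}_+^k$. A mechanism is a pair $\mu=(q,s)$ of Borel functions $q=(q_1,\dots,q_k):\mathbb{R}_+^k\to[0,1]^k$, $s:\mathbb{R}_+^k\to\mathbb{R}$ (for members of $\mathcal{M}_{\lambda_1,\dots,\lambda_k}$, $q$ takes values in $\prod_i[0,\lambda_i]$), with buyer payoff $b(x)=q(x)\cdot x-s(x)$; IR means $b(x)\ge0$ for all $x$; IC means $b(x)\ge q(\tilde x)\cdot x-s(\tilde x)$ for all $x,\tilde x$. $R(\mu;X)=\mathbb{E}[s(X)]$ and $\textsc{Rev}(X)$ is the supremum of $R(\mu;X)$ over all IC and IR mechanisms (with $q$ valued in $[0,1]^k$). *)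

theory Defs
  imports "HOL-Probability.Probability"
begin

text \<open>Valuations live in the nonnegative orthant of real^'k (k = CARD('k)).\<close>
definition orthant :: "(real^'k) set" where
  "orthant = {x. \<forall>i. 0 \<le> x $ i}"

definition payoff :: "(real^'k \<Rightarrow> real^'k) \<Rightarrow> (real^'k \<Rightarrow> real) \<Rightarrow> real^'k \<Rightarrow> real" where
  "payoff q s x = q x \<bullet> x - s x"

definition IR :: "(real^'k \<Rightarrow> real^'k) \<Rightarrow> (real^'k \<Rightarrow> real) \<Rightarrow> bool" where
  "IR q s \<longleftrightarrow> (\<forall>x\<in>orthant. payoff q s x \<ge> 0)"

definition IC :: "(real^'k \<Rightarrow> real^'k) \<Rightarrow> (real^'k \<Rightarrow> real) \<Rightarrow> bool" where
  "IC q s \<longleftrightarrow> (\<forall>x\<in>orthant. \<forall>y\<in>orthant. payoff q s x \<ge> q y \<bullet> x - s y)"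

text \<open>Borel mechanisms (q,s) with q_i(x) in [0, lam_i] on the orthant, that are IC and IR.
  With lam = (1,...,1) this is the class of all IC, IR mechanisms.\<close>
definition mechs :: "real^'k \<Rightarrow> ((real^'k \<Rightarrow> real^'k) \<times> (real^'k \<Rightarrow> real)) set" where
  "mechs lam = {(q, s). q \<in> borel_measurable borel \<and> s \<in> borel_measurable borel \<and>
      (\<forall>x\<in>orthant. \<forall>i. 0 \<le> q x $ i \<and> q x $ i \<le> lam $ i) \<and> IC q s \<and> IR q s}"

text \<open>Revenue R(mu; X) = E[s(X)], as an extended real (positive part minus negative part);
  for IC and IR mechanisms s is bounded below, so this is the well-defined expectation
  (possibly +infinity).\<close>
definition revenue :: "'a measure \<Rightarrow> ('a \<Rightarrow> real^'k) \<Rightarrow> (real^'k \<Rightarrow> real) \<Rightarrow> ereal" where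
  "revenue M X s = enn2ereal (\<integral>\<^sup>+ \<omega>. ennreal (s (X \<omega>)) \<partial>M)
                 - enn2ereal (\<integral>\<^sup>+ \<omega>. ennreal (- s (X \<omega>)) \<partial>M)"

definition Rev :: "'a measure \<Rightarrow> ('a \<Rightarrow> real^'k) \<Rightarrow> ereal" where
  "Rev M X = (SUP \<mu>\<in>mechs (\<chi> i. 1). revenue M X (snd \<mu>))"

end

theory Submission
  imports Defs
begin

text \<open>The identity is a change of variables. Scaling valuations coordinatewise by c > 0
  and conjugating a mechanism (q, s) to (c q(c x), s(c x)) preserves utilities, since
  (c u) \<bullet> x = u \<bullet> (c x); so it maps IC and IR mechanisms to IC and IR mechanisms, turns the
  allocation bound a into c a, and leaves the revenue against the correspondingly rescaled
  valuation unchanged. With c = \<lambda> and a = 1 this gives the theorem.\<close>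

lemma inner_mult_vec_commute:
  fixes c x y :: "real^'k"
  shows "(c * x) \<bullet> y = x \<bullet> (c * y)"
  unfolding inner_vec_def by (simp add: ac_simps)

lemma mult_vec_in_orthant:
  assumes "\<forall>i. 0 \<le> c $ i" and "x \<in> orthant"
  shows "c * x \<in> orthant"
  using assms unfolding orthant_def by simp

lemma borel_measurable_mult_vec: "(\<lambda>x. c * x :: real^'k) \<in> borel_measurable borel"
proof (rule borel_measurable_continuous_onI)
  have "continuous_on UNIV (\<lambda>x :: real^'k. \<chi> i. c $ i * x $ i)"
    by (intro continuous_on_vec_lambda continuous_intros)
  moreover have "(\<lambda>x :: real^'k. \<chi> i. c $ i * x $ i) = (\<lambda>x. c * x)"
    by (simp add: fun_eq_iff vec_eq_iff)
  ultimately show "continuous_on UNIV (\<lambda>x. c * x :: real^'k)"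
    by (simp only:)
qed

lemma rescaled_mechanism_in_mechs:
  fixes c a :: "real^'k" and q :: "real^'k \<Rightarrow> real^'k" and s :: "real^'k \<Rightarrow> real"
  assumes c: "\<forall>i. 0 < c $ i" and qs: "(q, s) \<in> mechs a"
  shows "(\<lambda>x. c * q (c * x), \<lambda>x. s (c * x)) \<in> mechs (c * a)"
proof -
  have q: "q \<in> borel_measurable borel" and s: "s \<in> borel_measurable borel"
    and bounds: "\<forall>x\<in>orthant. \<forall>i. 0 \<le> q x $ i \<and> q x $ i \<le> a $ i"
    and ic: "IC q s" and ir: "IR q s"
    using qs unfolding mechs_def by auto
  have c_orthant: "x \<in> orthant \<Longrightarrow> c * x \<in> orthant" for x
    using c by (intro mult_vec_in_orthant) (auto intro: less_imp_le)
  have payoff_rescaled: "payoff (\<lambda>x. c * q (c * x)) (\<lambda>x. s (c * x)) x = payoff q s (c * x)" for x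
    unfolding payoff_def by (simp add: inner_mult_vec_commute)
  have "(\<lambda>x. c * q (c * x)) \<in> borel_measurable borel"
    using measurable_compose[OF measurable_compose[OF borel_measurable_mult_vec q]
        borel_measurable_mult_vec] by simp
  moreover have "(\<lambda>x. s (c * x)) \<in> borel_measurable borel"
    using measurable_compose[OF borel_measurable_mult_vec s] by simp
  moreover have "\<forall>x\<in>orthant. \<forall>i. 0 \<le> (c * q (c * x)) $ i \<and> (c * q (c * x)) $ i \<le> (c * a) $ i"
  proof (intro ballI allI)
    fix x :: "real^'k" and i assume "x \<in> orthant"
    then have "0 \<le> q (c * x) $ i" "q (c * x) $ i \<le> a $ i"
      using bounds c_orthant by blast+
    moreover have "0 \<le> c $ i"
      using c less_imp_le by blast
    ultimately show "0 \<le> (c * q (c * x)) $ i \<and> (c * q (c * x)) $ i \<le> (c * a) $ i"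
      by (simp add: mult_left_mono)
  qed
  moreover have "IC (\<lambda>x. c * q (c * x)) (\<lambda>x. s (c * x))"
    using ic c_orthant unfolding IC_def payoff_rescaled by (simp add: inner_mult_vec_commute)
  moreover have "IR (\<lambda>x. c * q (c * x)) (\<lambda>x. s (c * x))"
    using ir c_orthant unfolding IR_def payoff_rescaled by blast
  ultimately show ?thesis
    unfolding mechs_def by blast
qed

lemma SUP_revenue_mechs_rescale:
  fixes c a :: "real^'k" and Y :: "'a \<Rightarrow> real^'k"
  assumes c: "\<forall>i. 0 < c $ i"
  shows "(SUP \<mu>\<in>mechs (c * a). revenue M Y (snd \<mu>))
       = (SUP \<mu>\<in>mechs a. revenue M (\<lambda>\<omega>. c * Y \<omega>) (snd \<mu>))"
proof (rule antisym)
  define d :: "real^'k" where "d = (\<chi> i. 1 / c $ i)"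
  have "\<And>i. c $ i \<noteq> 0"
    using c by (simp add: less_imp_neq[symmetric])
  then have d: "\<forall>i. 0 < d $ i" and dc: "\<And>x. d * (c * x) = x"
    using c by (auto simp: d_def vec_eq_iff)
  show "(SUP \<mu>\<in>mechs (c * a). revenue M Y (snd \<mu>))
      \<le> (SUP \<mu>\<in>mechs a. revenue M (\<lambda>\<omega>. c * Y \<omega>) (snd \<mu>))"
  proof (rule SUP_least)
    fix \<mu> assume "\<mu> \<in> mechs (c * a)"
    then obtain q s where \<mu>: "\<mu> = (q, s)" and qs: "(q, s) \<in> mechs (c * a)"
      by (cases \<mu>) auto
    have rescaled: "(\<lambda>x. d * q (d * x), \<lambda>x. s (d * x)) \<in> mechs a"
      using rescaled_mechanism_in_mechs[OF d qs] by (simp add: dc)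
    have "revenue M Y (snd \<mu>) = revenue M (\<lambda>\<omega>. c * Y \<omega>) (snd (\<lambda>x. d * q (d * x), \<lambda>x. s (d * x)))"
      by (simp add: \<mu> revenue_def dc)
    also have "\<dots> \<le> (SUP \<mu>\<in>mechs a. revenue M (\<lambda>\<omega>. c * Y \<omega>) (snd \<mu>))"
      by (rule SUP_upper[OF rescaled])
    finally show "revenue M Y (snd \<mu>) \<le> (SUP \<mu>\<in>mechs a. revenue M (\<lambda>\<omega>. c * Y \<omega>) (snd \<mu>))" .
  qed
  show "(SUP \<mu>\<in>mechs a. revenue M (\<lambda>\<omega>. c * Y \<omega>) (snd \<mu>))
      \<le> (SUP \<mu>\<in>mechs (c * a). revenue M Y (snd \<mu>))"
  proof (rule SUP_least)
    fix \<mu> assume "\<mu> \<in> mechs a"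
    then obtain q s where \<mu>: "\<mu> = (q, s)" and qs: "(q, s) \<in> mechs a"
      by (cases \<mu>) auto
    have rescaled: "(\<lambda>x. c * q (c * x), \<lambda>x. s (c * x)) \<in> mechs (c * a)"
      by (rule rescaled_mechanism_in_mechs[OF c qs])
    have "revenue M (\<lambda>\<omega>. c * Y \<omega>) (snd \<mu>) = revenue M Y (snd (\<lambda>x. c * q (c * x), \<lambda>x. s (c * x)))"
      by (simp add: \<mu> revenue_def)
    also have "\<dots> \<le> (SUP \<mu>\<in>mechs (c * a). revenue M Y (snd \<mu>))"
      by (rule SUP_upper[OF rescaled])
    finally show "revenue M (\<lambda>\<omega>. c * Y \<omega>) (snd \<mu>) \<le> (SUP \<mu>\<in>mechs (c * a). revenue M Y (snd \<mu>))" .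
  qed
qed

theorem lemma1:
  fixes M :: "'a measure" and X :: "'a \<Rightarrow> real^'k" and lam :: "real^'k"
  assumes "prob_space M"
    and "X \<in> borel_measurable M"
    and "\<forall>\<omega>\<in>space M. \<forall>i. 0 \<le> X \<omega> $ i"
    and "\<forall>i. 0 < lam $ i \<and> lam $ i \<le> 1"
  shows "Rev M X = (SUP \<mu>\<in>mechs lam. revenue M (\<lambda>\<omega>. \<chi> i. X \<omega> $ i / lam $ i) (snd \<mu>))"
proof -
  have lam: "\<forall>i. 0 < lam $ i"
    using assms(4) by blast
  then have "\<And>i. lam $ i \<noteq> 0"
    by (simp add: less_imp_neq[symmetric])
  then have X_eq: "(\<lambda>\<omega>. lam * (\<chi> i. X \<omega> $ i / lam $ i)) = X"
    by (simp add: fun_eq_iff vec_eq_iff)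
  have "Rev M X = (SUP \<mu>\<in>mechs 1. revenue M (\<lambda>\<omega>. lam * (\<chi> i. X \<omega> $ i / lam $ i)) (snd \<mu>))"
    unfolding X_eq Rev_def one_vec_def ..
  also have "\<dots> = (SUP \<mu>\<in>mechs (lam * 1). revenue M (\<lambda>\<omega>. \<chi> i. X \<omega> $ i / lam $ i) (snd \<mu>))"
    by (rule SUP_revenue_mechs_rescale[OF lam, symmetric])
  finally show ?thesis
    by simp
qed

end
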